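(* Let $\alpha\in(0,1)$, $T>0$, and $\mathcal{A}\in\mathbb{C}^{d\times d}$. Then the series of operators $\sum_{j=0}^\infty\mathcal{A}^j\,{}^LJ^{(j+1)\circ\alpha}$ converges (absolutely) in the Banach space $\mathcal{L}(\mathcal{C}[0,T])$ of bounded linear operators on $\mathcal{C}[0,T]$ with the induced norm.
   Context: $\mathcal{C}[0,T]$: continuous $y:[0,T]\to\mathbb{C}^d$ with sup norm $\|y\|_\infty=\max|y(t)|$. L-fractional integral: ${}^LJ^\alpha y(t)=\frac{1}{\Gamma(\alpha)\Gamma(2-\alpha)}\int_0^t (t-s)^{\alpha-1}s^{1-\alpha}y(s)\,ds$ (componentwise); ${}^LJ^{m\circ\alpha}$ is its $m$-fold composition. $\mathcal{A}^j{}^LJ^{(j+1)\circ\alpha}$ is the operator $y\mapsto(t\mapsto\mathcal{A}^j\,{}^LJ^{(j+1)\circ\alpha}y(t))$. *)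

theory Defs
  imports "HOL-Analysis.Analysis"
begin

definition matpow :: "complex^'d^'d \<Rightarrow> nat \<Rightarrow> complex^'d^'d" where
  "matpow A j = (((**) A) ^^ j) (mat 1)"

text \<open>The space C[0,T] of continuous functions [0,T] -> C^d (functions are
  represented as total functions real => complex^'d; only values on [0,T] matter).\<close>
definition Cspace :: "real \<Rightarrow> (real \<Rightarrow> complex^'d) set" where
  "Cspace T = {y. continuous_on {0..T} y}"

definition supnorm :: "real \<Rightarrow> (real \<Rightarrow> complex^'d) \<Rightarrow> real" where
  "supnorm T y = (SUP t\<in>{0..T}. norm (y t))"

definition bounded_op :: "real \<Rightarrow> ((real \<Rightarrow> complex^'d) \<Rightarrow> (real \<Rightarrow> complex^'e)) \<Rightarrow> bool" where
  "bounded_op T K = bdd_above {supnorm T (K y) | y. y \<in> Cspace T \<and> supnorm T y \<le> 1}"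

definition opnorm :: "real \<Rightarrow> ((real \<Rightarrow> complex^'d) \<Rightarrow> (real \<Rightarrow> complex^'e)) \<Rightarrow> real" where
  "opnorm T K = Sup {supnorm T (K y) | y. y \<in> Cspace T \<and> supnorm T y \<le> 1}"

definition LJ :: "real \<Rightarrow> (real \<Rightarrow> complex^'d) \<Rightarrow> (real \<Rightarrow> complex^'d)" where
  "LJ \<alpha> y = (\<lambda>t. (1 / (Gamma \<alpha> * Gamma (2 - \<alpha>))) *\<^sub>R
      integral {0..t} (\<lambda>s. ((t - s) powr (\<alpha> - 1) * s powr (1 - \<alpha>)) *\<^sub>R y s))"

definition LJpow :: "real \<Rightarrow> nat \<Rightarrow> (real \<Rightarrow> complex^'d) \<Rightarrow> (real \<Rightarrow> complex^'d)" where
  "LJpow \<alpha> m = (LJ \<alpha> ^^ m)"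

definition series_term :: "complex^'d^'d \<Rightarrow> real \<Rightarrow> nat \<Rightarrow> (real \<Rightarrow> complex^'d) \<Rightarrow> (real \<Rightarrow> complex^'d)" where
  "series_term A \<alpha> j y = (\<lambda>t. matpow A j *v LJpow \<alpha> (Suc j) y t)"

end

theory Submission
  imports Defs
begin

text \<open>The substitution \<open>s = t u\<close> writes \<open>LJ \<alpha> y t\<close> as \<open>t / (\<Gamma>(\<alpha>) \<Gamma>(2 - \<alpha>))\<close> times
  \<open>\<integral>\<^sub>0\<^sup>1 w(u) y(t u) du\<close> with the integrable weight \<open>w(u) = (1 - u)\<^sup>\<alpha>\<^sup>-\<^sup>1 u\<^sup>1\<^sup>-\<^sup>\<alpha>\<close>.
  So a bound \<open>|y(s)| \<le> M s\<^sup>k\<close> on \<open>[0, T]\<close> gives \<open>|LJ \<alpha> y t| \<le> M c\<^sub>k t\<^sup>k\<^sup>+\<^sup>1\<close>, where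
  \<open>c\<^sub>k\<close> is a multiple of the moment \<open>\<integral>\<^sub>0\<^sup>1 w(u) u\<^sup>k du\<close> and tends to \<open>0\<close> by dominated
  convergence. Iterating, the \<open>j\<close>-th term of the series has operator norm at most
  \<open>\<parallel>A\<parallel>\<^sup>j c\<^sub>0 \<cdots> c\<^sub>j T\<^sup>j\<^sup>+\<^sup>1\<close>; these bounds decay faster than any geometric sequence, and the
  Weierstrass M-test in the sup norm produces the limit operator.\<close>

lemma has_integral_one_minus_powr:
  fixes \<alpha> :: real
  assumes "0 < \<alpha>"
  shows "((\<lambda>u. (1 - u) powr (\<alpha> - 1)) has_integral 1 / \<alpha>) {0..1}"
proof -
  define G where "G = (\<lambda>u::real. - ((1 - u) powr \<alpha>) / \<alpha>)"
  have "((\<lambda>u. (1 - u) powr (\<alpha> - 1)) has_integral (G 1 - G 0)) {0..1}"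
  proof (rule fundamental_theorem_of_calculus_interior)
    show "continuous_on {0..1} G"
      unfolding G_def using assms by (intro continuous_intros continuous_on_powr') auto
    fix x :: real assume x: "x \<in> {0<..<1}"
    have "(G has_real_derivative (1 - x) powr (\<alpha> - 1)) (at x)"
      unfolding G_def using x assms by (auto intro!: derivative_eq_intros simp: field_simps)
    then show "(G has_vector_derivative (1 - x) powr (\<alpha> - 1)) (at x)"
      by (simp add: has_real_derivative_iff_has_vector_derivative)
  qed simp
  then show ?thesis using assms by (simp add: G_def)
qed

lemma absolutely_integrable_one_minus_powr_scaleR:
  fixes g :: "real \<Rightarrow> 'a::euclidean_space"
  assumes "0 < \<alpha>" and g: "continuous_on {0..1} g"
  shows "(\<lambda>u. (1 - u) powr (\<alpha> - 1) *\<^sub>R g u) absolutely_integrable_on {0..1}"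
proof -
  have bilinear: "bilinear (\<lambda>(v::'a) (r::real). r *\<^sub>R v)"
    by (metis bounded_bilinear.flip[OF bounded_bilinear_scaleR] bilinear_conv_bounded_bilinear)
  have "(\<lambda>u. (1 - u) powr (\<alpha> - 1)) absolutely_integrable_on {0..1}"
    using has_integral_one_minus_powr[OF assms(1)] by (intro nonnegative_absolutely_integrable_1) auto
  moreover have "g \<in> borel_measurable (lebesgue_on {0..1})"
    by (rule continuous_imp_measurable_on_sets_lebesgue[OF g]) simp
  moreover have "bounded (g ` {0..1})"
    by (intro compact_imp_bounded compact_continuous_image g) simp
  ultimately have "(\<lambda>u. (\<lambda>v r. r *\<^sub>R v) (g u) ((1 - u) powr (\<alpha> - 1))) absolutely_integrable_on {0..1}"
    by (intro absolutely_integrable_bounded_measurable_product[OF bilinear]) auto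
  then show ?thesis by simp
qed

definition L_kernel :: "real \<Rightarrow> real \<Rightarrow> real" where
  "L_kernel \<alpha> u = (1 - u) powr (\<alpha> - 1) * u powr (1 - \<alpha>)"

lemma L_kernel_nonneg: "0 \<le> L_kernel \<alpha> u"
  by (simp add: L_kernel_def)

lemma integrable_L_kernel_scaleR:
  fixes g :: "real \<Rightarrow> 'a::euclidean_space"
  assumes "0 < \<alpha>" "\<alpha> < 1" and g: "continuous_on {0..1} g"
  shows "(\<lambda>u. L_kernel \<alpha> u *\<^sub>R g u) integrable_on {0..1}"
proof -
  have "continuous_on {0..1} (\<lambda>u::real. u powr (1 - \<alpha>))"
    by (rule continuous_on_powr') (use assms in \<open>auto intro: continuous_intros\<close>)
  then have "continuous_on {0..1} (\<lambda>u. u powr (1 - \<alpha>) *\<^sub>R g u)"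
    using g by (rule continuous_on_scaleR)
  from absolutely_integrable_one_minus_powr_scaleR[OF assms(1) this] show ?thesis
    unfolding absolutely_integrable_on_def by (simp add: L_kernel_def)
qed

lemma mult_mem_atLeastAtMost_unit:
  "t \<in> {0..T} \<Longrightarrow> u \<in> {0..1} \<Longrightarrow> t * (u::real) \<in> {0..T}"
  using mult_left_le[of u t] by auto

lemma continuous_on_rescale:
  fixes y :: "real \<Rightarrow> 'a::topological_space"
  assumes "continuous_on {0..T} y" "t \<in> {0..T}"
  shows "continuous_on {0..1} (\<lambda>u. y (t * u))"
  by (rule continuous_on_compose2[OF assms(1)])
    (use assms(2) mult_mem_atLeastAtMost_unit in \<open>auto intro!: continuous_intros\<close>)

lemma has_integral_L_rescaled:
  fixes y :: "real \<Rightarrow> 'a::euclidean_space"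
  assumes "0 < \<alpha>" "\<alpha> < 1" and t: "0 < t" and y: "continuous_on {0..t} y"
  shows "((\<lambda>s. ((t - s) powr (\<alpha> - 1) * s powr (1 - \<alpha>)) *\<^sub>R y s) has_integral
       t *\<^sub>R integral {0..1} (\<lambda>u. L_kernel \<alpha> u *\<^sub>R y (t * u))) {0..t}"
proof -
  define h where "h = (\<lambda>u. L_kernel \<alpha> u *\<^sub>R y (t * u))"
  have "h integrable_on {0..1}"
    unfolding h_def using t
    by (intro integrable_L_kernel_scaleR assms continuous_on_rescale[OF y]) auto
  then have "((\<lambda>x. h ((1 / t) *\<^sub>R x + 0)) has_integral (1 / (\<bar>1 / t\<bar> ^ DIM(real))) *\<^sub>R integral {0..1} h)
          ((\<lambda>x. (1 / (1 / t)) *\<^sub>R x + - ((1 / (1 / t)) *\<^sub>R 0)) ` cbox 0 1)"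
    by (intro has_integral_affinity) (use t in \<open>auto simp: integrable_integral\<close>)
  moreover have "(\<lambda>x. x * t) ` {0..1} = {0..t}"
    using image_mult_atLeastAtMost[of t 0 1] t by (simp add: mult.commute)
  ultimately have scaled: "((\<lambda>s. h (s / t)) has_integral t *\<^sub>R integral {0..1} h) {0..t}"
    using t by (simp add: divide_inverse mult.commute)
  have "L_kernel \<alpha> (s / t) = (t - s) powr (\<alpha> - 1) * s powr (1 - \<alpha>)" if "s \<in> {0..t}" for s
  proof -
    have "1 - s / t = (t - s) / t" using t by (simp add: field_simps)
    moreover have "t powr (\<alpha> - 1) * t powr (1 - \<alpha>) = 1" using t by (simp flip: powr_add)
    ultimately show ?thesis
      unfolding L_kernel_def using that t by (simp add: powr_divide)
  qed
  then show ?thesis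
    unfolding h_def[symmetric]
    by (intro has_integral_spike_finite_eq[THEN iffD1, OF _ _ scaled, of "{}"]) (use t in \<open>auto simp: h_def\<close>)
qed

lemma LJ_eq_rescaled:
  fixes y :: "real \<Rightarrow> complex^'d"
  assumes "0 < \<alpha>" "\<alpha> < 1" and y: "continuous_on {0..T} y" and t: "t \<in> {0..T}"
  shows "LJ \<alpha> y t = (t / (Gamma \<alpha> * Gamma (2 - \<alpha>))) *\<^sub>R integral {0..1} (\<lambda>u. L_kernel \<alpha> u *\<^sub>R y (t * u))"
proof (cases "t = 0")
  case True
  then show ?thesis by (simp add: LJ_def)
next
  case False
  with t have t0: "0 < t" by auto
  have "continuous_on {0..t} y" using continuous_on_subset[OF y, of "{0..t}"] t by auto
  from integral_unique[OF has_integral_L_rescaled[OF assms(1,2) t0 this]] show ?thesis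
    unfolding LJ_def by (simp add: divide_inverse mult.commute)
qed

lemma continuous_on_L_rescaled_integral:
  fixes y :: "real \<Rightarrow> 'a::euclidean_space"
  assumes \<alpha>: "0 < \<alpha>" "\<alpha> < 1" and y: "continuous_on {0..T} y"
  shows "continuous_on {0..T} (\<lambda>t. integral {0..1} (\<lambda>u. L_kernel \<alpha> u *\<^sub>R y (t * u)))"
  unfolding continuous_on_sequentially comp_def
proof (intro allI ballI impI, elim conjE)
  obtain B where B: "\<And>s. s \<in> {0..T} \<Longrightarrow> norm (y s) \<le> B"
    using compact_imp_bounded[OF compact_continuous_image[OF y compact_Icc]]
    unfolding bounded_iff by (metis imageI)
  fix x :: "nat \<Rightarrow> real" and t assume t: "t \<in> {0..T}" and x: "\<forall>n. x n \<in> {0..T}"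
    and lim: "x \<longlonglongrightarrow> t"
  show "(\<lambda>n. integral {0..1} (\<lambda>u. L_kernel \<alpha> u *\<^sub>R y (x n * u)))
      \<longlonglongrightarrow> integral {0..1} (\<lambda>u. L_kernel \<alpha> u *\<^sub>R y (t * u))"
  proof (rule dominated_convergence(2))
    show "(\<lambda>u. L_kernel \<alpha> u *\<^sub>R y (x n * u)) integrable_on {0..1}" for n
      using x by (intro integrable_L_kernel_scaleR \<alpha> continuous_on_rescale[OF y]) auto
    show "(\<lambda>u. L_kernel \<alpha> u * B) integrable_on {0..1}"
      using integrable_L_kernel_scaleR[OF \<alpha>, of "\<lambda>_. B"] by simp
    fix n and u :: real assume u: "u \<in> {0..1}"
    then have "x n * u \<in> {0..T}" using x mult_mem_atLeastAtMost_unit by blast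
    then show "norm (L_kernel \<alpha> u *\<^sub>R y (x n * u)) \<le> L_kernel \<alpha> u * B"
      using B L_kernel_nonneg[of \<alpha> u] by (simp add: mult_left_mono)
  next
    fix u :: real assume u: "u \<in> {0..1}"
    have "(\<lambda>n. y (x n * u)) \<longlonglongrightarrow> y (t * u)"
      using t x u mult_mem_atLeastAtMost_unit
      by (intro continuous_on_tendsto_compose[OF y] tendsto_mult_right lim always_eventually) auto
    then show "(\<lambda>n. L_kernel \<alpha> u *\<^sub>R y (x n * u)) \<longlonglongrightarrow> L_kernel \<alpha> u *\<^sub>R y (t * u)"
      by (rule tendsto_scaleR[OF tendsto_const])
  qed
qed

lemma continuous_on_LJ:
  fixes y :: "real \<Rightarrow> complex^'d"
  assumes "0 < \<alpha>" "\<alpha> < 1" and y: "continuous_on {0..T} y"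
  shows "continuous_on {0..T} (LJ \<alpha> y)"
proof (rule continuous_on_eq)
  have "Gamma \<alpha> \<noteq> 0" "Gamma (2 - \<alpha>) \<noteq> 0"
    using assms Gamma_real_pos[of \<alpha>] Gamma_real_pos[of "2 - \<alpha>"] by (simp_all del: Gamma_real_pos)
  then show "continuous_on {0..T}
      (\<lambda>t. (t / (Gamma \<alpha> * Gamma (2 - \<alpha>))) *\<^sub>R integral {0..1} (\<lambda>u. L_kernel \<alpha> u *\<^sub>R y (t * u)))"
    using assms by (intro continuous_on_scaleR continuous_intros continuous_on_L_rescaled_integral) auto
qed (subst LJ_eq_rescaled[OF assms]; simp)

definition L_factor :: "real \<Rightarrow> nat \<Rightarrow> real" where
  "L_factor \<alpha> k = integral {0..1} (\<lambda>u. L_kernel \<alpha> u * u ^ k) / (Gamma \<alpha> * Gamma (2 - \<alpha>))"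

lemma integrable_L_kernel_power:
  assumes "0 < \<alpha>" "\<alpha> < 1"
  shows "(\<lambda>u. L_kernel \<alpha> u * u ^ k) integrable_on {0..1}"
  using integrable_L_kernel_scaleR[OF assms, of "\<lambda>u. u ^ k"] by (simp add: continuous_intros)

lemma L_factor_nonneg:
  assumes "0 < \<alpha>" "\<alpha> < 1"
  shows "0 \<le> L_factor \<alpha> k"
proof -
  have "0 \<le> integral {0..1} (\<lambda>u. L_kernel \<alpha> u * u ^ k)"
    by (intro integral_nonneg integrable_L_kernel_power assms) (simp add: L_kernel_nonneg)
  then show ?thesis
    unfolding L_factor_def using assms by (simp add: Gamma_real_pos)
qed

lemma L_factor_tendsto_zero:
  assumes \<alpha>: "0 < \<alpha>" "\<alpha> < 1"
  shows "L_factor \<alpha> \<longlonglongrightarrow> 0"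
proof -
  have "(\<lambda>k. integral {0..1} (\<lambda>u. L_kernel \<alpha> u * u ^ k)) \<longlonglongrightarrow> integral {0..1} (\<lambda>u::real. 0::real)"
  proof (rule dominated_convergence(2)[where h = "L_kernel \<alpha>"])
    show "(\<lambda>u. L_kernel \<alpha> u * u ^ k) integrable_on {0..1}" for k
      by (rule integrable_L_kernel_power[OF \<alpha>])
    show "L_kernel \<alpha> integrable_on {0..1}"
      using integrable_L_kernel_power[OF \<alpha>, of 0] by simp
    fix k and u :: real assume "u \<in> {0..1}"
    then show "norm (L_kernel \<alpha> u * u ^ k) \<le> L_kernel \<alpha> u"
      using L_kernel_nonneg[of \<alpha> u] by (simp add: abs_mult mult_left_le power_le_one)
  next
    fix u :: real assume u: "u \<in> {0..1}"
    show "(\<lambda>k. L_kernel \<alpha> u * u ^ k) \<longlonglongrightarrow> 0"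
    proof (cases "u = 1")
      case True
      then show ?thesis by (simp add: L_kernel_def)
    next
      case False
      with u have "(\<lambda>k. u ^ k) \<longlonglongrightarrow> 0" by (intro LIMSEQ_power_zero) auto
      then show ?thesis by (rule tendsto_mult_right_zero)
    qed
  qed
  then show ?thesis
    unfolding L_factor_def by (intro tendsto_divide_zero) simp
qed

lemma norm_LJ_le_power:
  fixes y :: "real \<Rightarrow> complex^'d"
  assumes \<alpha>: "0 < \<alpha>" "\<alpha> < 1" and y: "continuous_on {0..T} y" and t: "t \<in> {0..T}"
    and M: "0 \<le> M" and y_le: "\<And>s. s \<in> {0..T} \<Longrightarrow> norm (y s) \<le> M * s ^ k"
  shows "norm (LJ \<alpha> y t) \<le> M * L_factor \<alpha> k * t ^ Suc k"
proof -
  define c where "c = 1 / (Gamma \<alpha> * Gamma (2 - \<alpha>))"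
  have c: "0 < c" unfolding c_def using \<alpha> by (simp add: Gamma_real_pos)
  have t0: "0 \<le> t" using t by simp
  have "norm (integral {0..1} (\<lambda>u. L_kernel \<alpha> u *\<^sub>R y (t * u)))
      \<le> integral {0..1} (\<lambda>u. L_kernel \<alpha> u * (M * t ^ k * u ^ k))"
  proof (rule integral_norm_bound_integral)
    show "(\<lambda>u. L_kernel \<alpha> u *\<^sub>R y (t * u)) integrable_on {0..1}"
      by (intro integrable_L_kernel_scaleR \<alpha> continuous_on_rescale[OF y t])
    show "(\<lambda>u. L_kernel \<alpha> u * (M * t ^ k * u ^ k)) integrable_on {0..1}"
      using integrable_L_kernel_scaleR[OF \<alpha>, of "\<lambda>u. M * t ^ k * u ^ k"] by (simp add: continuous_intros)
    fix u :: real assume "u \<in> {0..1}"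
    then have "norm (y (t * u)) \<le> M * (t * u) ^ k"
      using y_le mult_mem_atLeastAtMost_unit[OF t] by blast
    then show "norm (L_kernel \<alpha> u *\<^sub>R y (t * u)) \<le> L_kernel \<alpha> u * (M * t ^ k * u ^ k)"
      using L_kernel_nonneg[of \<alpha> u] by (simp add: mult_left_mono power_mult_distrib mult.assoc)
  qed
  also have "\<dots> = M * t ^ k * integral {0..1} (\<lambda>u. L_kernel \<alpha> u * u ^ k)"
    by (simp flip: integral_mult_right add: mult_ac)
  finally have "c * t * norm (integral {0..1} (\<lambda>u. L_kernel \<alpha> u *\<^sub>R y (t * u)))
      \<le> c * t * (M * t ^ k * integral {0..1} (\<lambda>u. L_kernel \<alpha> u * u ^ k))"
    using c t0 by (simp add: mult_left_mono)
  then show ?thesis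
    using LJ_eq_rescaled[OF \<alpha> y t] c t0
    by (simp add: L_factor_def c_def field_simps)
qed

lemma continuous_on_LJpow:
  fixes y :: "real \<Rightarrow> complex^'d"
  assumes "0 < \<alpha>" "\<alpha> < 1" and "continuous_on {0..T} y"
  shows "continuous_on {0..T} (LJpow \<alpha> m y)"
  by (induction m) (simp_all add: LJpow_def assms continuous_on_LJ)

lemma norm_LJpow_le:
  fixes y :: "real \<Rightarrow> complex^'d"
  assumes \<alpha>: "0 < \<alpha>" "\<alpha> < 1" and y: "continuous_on {0..T} y"
    and Y: "0 \<le> Y" and y_le: "\<And>s. s \<in> {0..T} \<Longrightarrow> norm (y s) \<le> Y"
    and t: "t \<in> {0..T}"
  shows "norm (LJpow \<alpha> m y t) \<le> Y * (\<Prod>k<m. L_factor \<alpha> k) * t ^ m"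
  using t
proof (induction m arbitrary: t)
  case 0
  then show ?case using y_le by (simp add: LJpow_def)
next
  case (Suc m)
  have "0 \<le> Y * (\<Prod>k<m. L_factor \<alpha> k)"
    using Y L_factor_nonneg[OF \<alpha>] by (simp add: prod_nonneg)
  from norm_LJ_le_power[OF \<alpha> continuous_on_LJpow[OF \<alpha> y] Suc.prems this Suc.IH]
  show ?case by (simp add: LJpow_def mult_ac)
qed

lemma norm_le_supnorm:
  fixes y :: "real \<Rightarrow> complex^'d"
  assumes "y \<in> Cspace T" "t \<in> {0..T}"
  shows "norm (y t) \<le> supnorm T y"
proof -
  have "bounded ((\<lambda>t. norm (y t)) ` {0..T})"
    using assms(1) unfolding Cspace_def
    by (intro compact_imp_bounded compact_continuous_image continuous_intros) auto
  then have "bdd_above ((\<lambda>t. norm (y t)) ` {0..T})" by (rule bounded_imp_bdd_above)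
  then show ?thesis unfolding supnorm_def using assms(2) by (rule cSUP_upper2) simp
qed

lemma supnorm_nonneg:
  fixes y :: "real \<Rightarrow> complex^'d"
  assumes "y \<in> Cspace T" "0 \<le> T"
  shows "0 \<le> supnorm T y"
  using order_trans[OF norm_ge_zero norm_le_supnorm[OF assms(1), of 0]] assms(2) by simp

lemma supnorm_le:
  fixes y :: "real \<Rightarrow> complex^'d"
  assumes "0 \<le> T" "\<And>t. t \<in> {0..T} \<Longrightarrow> norm (y t) \<le> B"
  shows "supnorm T y \<le> B"
  unfolding supnorm_def using assms by (intro cSUP_least) auto

lemma zero_in_unit_ball_Cspace:
  assumes "0 \<le> T"
  shows "(\<lambda>t. 0) \<in> Cspace T" "supnorm T (\<lambda>t. 0::complex^'d) \<le> 1"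
  by (simp add: Cspace_def) (rule supnorm_le[OF assms], simp)

lemma opnorm_le_and_bounded_op:
  fixes K :: "(real \<Rightarrow> complex^'d) \<Rightarrow> (real \<Rightarrow> complex^'d)"
  assumes "0 \<le> T" and B: "\<And>y. y \<in> Cspace T \<Longrightarrow> supnorm T y \<le> 1 \<Longrightarrow> supnorm T (K y) \<le> B"
  shows "opnorm T K \<le> B \<and> bounded_op T K"
proof
  have "{supnorm T (K y) | y. y \<in> Cspace T \<and> supnorm T y \<le> 1} \<noteq> {}"
    using zero_in_unit_ball_Cspace[OF assms(1)] by blast
  then show "opnorm T K \<le> B"
    unfolding opnorm_def using B by (intro cSup_least) auto
  show "bounded_op T K"
    unfolding bounded_op_def bdd_above_def using B by blast
qed

lemma opnorm_nonneg:
  fixes K :: "(real \<Rightarrow> complex^'d) \<Rightarrow> (real \<Rightarrow> complex^'d)"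
  assumes T: "0 \<le> T" and K: "\<And>y. y \<in> Cspace T \<Longrightarrow> K y \<in> Cspace T" and "bounded_op T K"
  shows "0 \<le> opnorm T K"
proof -
  note zero = zero_in_unit_ball_Cspace[OF T]
  have "0 \<le> supnorm T (K (\<lambda>t. 0))"
    by (rule supnorm_nonneg[OF K[OF zero(1)] T])
  also have "\<dots> \<le> opnorm T K"
    unfolding opnorm_def
    by (rule cSup_upper) (use zero assms(3) in \<open>auto simp: bounded_op_def\<close>)
  finally show ?thesis .
qed

lemma norm_matpow_mult_le:
  fixes A :: "complex^'d^'d"
  assumes K: "\<And>x. norm (A *v x) \<le> norm x * K" and "0 \<le> K"
  shows "norm (matpow A j *v x) \<le> K ^ j * norm x"
proof (induction j arbitrary: x)
  case 0
  then show ?case by (simp add: matpow_def)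
next
  case (Suc j)
  have "norm (matpow A (Suc j) *v x) = norm (A *v (matpow A j *v x))"
    by (simp add: matpow_def matrix_vector_mul_assoc)
  also have "\<dots> \<le> norm (matpow A j *v x) * K" by (rule K)
  also have "\<dots> \<le> K ^ j * norm x * K" using Suc \<open>0 \<le> K\<close> by (simp add: mult_right_mono)
  finally show ?case by (simp add: mult_ac)
qed

lemma summable_ratio_tendsto_zero:
  fixes f :: "nat \<Rightarrow> real"
  assumes "\<And>n. 0 \<le> f n" and "\<And>n. f (Suc n) \<le> q n * f n" and "q \<longlonglongrightarrow> 0"
  shows "summable f"
proof -
  obtain N where N: "\<And>n. n \<ge> N \<Longrightarrow> q n < 1/2"
    using order_tendstoD(2)[OF assms(3), of "1/2"] by (auto simp: eventually_sequentially)
  show ?thesis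
  proof (rule summable_ratio_test[of "1/2" N])
    fix n assume "n \<ge> N"
    then have "q n * f n \<le> 1/2 * f n"
      using N[OF \<open>n \<ge> N\<close>] assms(1)[of n] by (intro mult_right_mono) auto
    then show "norm (f (Suc n)) \<le> 1/2 * norm (f n)"
      using assms(1,2)[of n] assms(1)[of "Suc n"] by simp
  qed simp
qed

lemma series_term_Cspace:
  assumes "0 < \<alpha>" "\<alpha> < 1" and "y \<in> Cspace T"
  shows "series_term A \<alpha> j y \<in> Cspace T"
  using continuous_on_LJpow[OF assms(1,2)] assms(3)
  unfolding Cspace_def series_term_def
  by (auto intro: bounded_linear.continuous_on[OF matrix_vector_mul_bounded_linear])

lemma norm_series_term_le:
  fixes A :: "complex^'d^'d"
  assumes \<alpha>: "0 < \<alpha>" "\<alpha> < 1" and y: "y \<in> Cspace T" and t: "t \<in> {0..T}"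
    and A: "\<And>x. norm (A *v x) \<le> norm x * K" and K: "0 \<le> K"
  shows "norm (series_term A \<alpha> j y t) \<le> supnorm T y * (K ^ j * (\<Prod>k<Suc j. L_factor \<alpha> k) * T ^ Suc j)"
proof -
  have y_cont: "continuous_on {0..T} y" using y by (simp add: Cspace_def)
  have Y: "0 \<le> supnorm T y" using y t by (intro supnorm_nonneg) auto
  have P: "0 \<le> (\<Prod>k<Suc j. L_factor \<alpha> k)" by (simp add: prod_nonneg L_factor_nonneg[OF \<alpha>])
  have "norm (series_term A \<alpha> j y t) \<le> K ^ j * norm (LJpow \<alpha> (Suc j) y t)"
    unfolding series_term_def by (rule norm_matpow_mult_le[OF A K])
  also have "\<dots> \<le> K ^ j * (supnorm T y * (\<Prod>k<Suc j. L_factor \<alpha> k) * t ^ Suc j)"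
    by (intro mult_left_mono[OF norm_LJpow_le[OF \<alpha> y_cont Y norm_le_supnorm[OF y] t]] zero_le_power K)
  also have "\<dots> \<le> K ^ j * (supnorm T y * (\<Prod>k<Suc j. L_factor \<alpha> k) * T ^ Suc j)"
    using t K Y P by (intro mult_left_mono power_mono) auto
  finally show ?thesis by (simp add: mult_ac)
qed

lemma summable_series_term_bound:
  assumes \<alpha>: "0 < \<alpha>" "\<alpha> < 1" and "0 \<le> K" "0 \<le> T"
  shows "summable (\<lambda>j. K ^ j * (\<Prod>k<Suc j. L_factor \<alpha> k) * T ^ Suc j)"
proof (rule summable_ratio_tendsto_zero)
  show "0 \<le> K ^ j * (\<Prod>k<Suc j. L_factor \<alpha> k) * T ^ Suc j" for j
    using assms by (simp add: prod_nonneg L_factor_nonneg[OF \<alpha>])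
  show "K ^ Suc j * (\<Prod>k<Suc (Suc j). L_factor \<alpha> k) * T ^ Suc (Suc j)
      \<le> K * T * L_factor \<alpha> (Suc j) * (K ^ j * (\<Prod>k<Suc j. L_factor \<alpha> k) * T ^ Suc j)" for j
    by (simp add: mult_ac)
  show "(\<lambda>j. K * T * L_factor \<alpha> (Suc j)) \<longlonglongrightarrow> 0"
    using L_factor_tendsto_zero[OF \<alpha>, THEN LIMSEQ_Suc] by (rule tendsto_mult_right_zero)
qed

context
  fixes T :: real and Op :: "nat \<Rightarrow> (real \<Rightarrow> complex^'d) \<Rightarrow> (real \<Rightarrow> complex^'d)"
    and M :: "nat \<Rightarrow> real"
  assumes T: "0 \<le> T"
    and Op_Cspace: "\<And>j y. y \<in> Cspace T \<Longrightarrow> Op j y \<in> Cspace T"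
    and Op_le: "\<And>j y t. y \<in> Cspace T \<Longrightarrow> t \<in> {0..T} \<Longrightarrow> norm (Op j y t) \<le> supnorm T y * M j"
    and M_nonneg: "\<And>j. 0 \<le> M j" and M_summable: "summable M"
begin

lemma norm_operator_le:
  assumes "y \<in> Cspace T" "supnorm T y \<le> 1" "t \<in> {0..T}"
  shows "norm (Op j y t) \<le> M j"
  using Op_le[OF assms(1,3), of j] mult_right_mono[OF assms(2) M_nonneg[of j]] by simp

lemma operator_terms_summable:
  "(\<forall>j. bounded_op T (Op j)) \<and> summable (\<lambda>j. opnorm T (Op j))"
proof -
  have op: "opnorm T (Op j) \<le> M j \<and> bounded_op T (Op j)" for j
    by (intro opnorm_le_and_bounded_op T supnorm_le) (rule norm_operator_le)
  moreover have "0 \<le> opnorm T (Op j)" for j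
    using op by (intro opnorm_nonneg T Op_Cspace) auto
  ultimately show ?thesis
    by (auto intro: summable_comparison_test'[OF M_summable])
qed

lemma operator_series_converges:
  "\<exists>S. (\<forall>y\<in>Cspace T. S y \<in> Cspace T) \<and> bounded_op T S
     \<and> (\<lambda>n. opnorm T (\<lambda>y t. S y t - (\<Sum>j<n. Op j y t))) \<longlonglongrightarrow> 0"
proof -
  define S where "S y = (\<lambda>t. \<Sum>j. Op j y t)" for y
  define R where "R n = (\<lambda>y t. S y t - (\<Sum>j<n. Op j y t))" for n
  define tail where "tail n = (\<Sum>j. M (j + n))" for n
  have S_Cspace: "S y \<in> Cspace T" if y: "y \<in> Cspace T" for y
  proof -
    have "uniform_limit {0..T} (\<lambda>n t. \<Sum>j<n. Op j y t) (S y) sequentially"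
      unfolding S_def by (rule Weierstrass_m_test[OF Op_le[OF y] summable_mult[OF M_summable]])
    moreover have "\<forall>n. continuous_on {0..T} (\<lambda>t. \<Sum>j<n. Op j y t)"
      using Op_Cspace[OF y] unfolding Cspace_def by (intro allI continuous_on_sum) auto
    ultimately have "continuous_on {0..T} (S y)"
      by (intro uniform_limit_theorem[OF always_eventually]) auto
    then show ?thesis by (simp add: Cspace_def)
  qed
  have "supnorm T (S y) \<le> suminf M" if y: "y \<in> Cspace T" "supnorm T y \<le> 1" for y
    unfolding S_def
    by (intro supnorm_le[OF T] norm_suminf_le[OF norm_operator_le[OF y] M_summable])
  then have S_bounded: "bounded_op T S"
    by (rule conjunct2[OF opnorm_le_and_bounded_op[OF T]])
  have R_le: "opnorm T (R n) \<le> tail n \<and> bounded_op T (R n)" for n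
  proof (intro opnorm_le_and_bounded_op T supnorm_le)
    fix y :: "real \<Rightarrow> complex^'d" and t
    assume y: "y \<in> Cspace T" "supnorm T y \<le> 1" and t: "t \<in> {0..T}"
    have "summable (\<lambda>j. Op j y t)"
      using Op_le[OF y(1) t] by (intro summable_comparison_test'[OF summable_mult[OF M_summable]])
    then have "R n y t = (\<Sum>j. Op (j + n) y t)"
      unfolding R_def S_def by (rule suminf_minus_initial_segment[symmetric])
    also have "norm \<dots> \<le> tail n"
      unfolding tail_def using norm_operator_le[OF y t] M_summable by (intro norm_suminf_le) auto
    finally show "norm (R n y t) \<le> tail n" .
  qed
  have R_nonneg: "0 \<le> opnorm T (R n)" for n
  proof (rule opnorm_nonneg[OF T _ conjunct2[OF R_le]])
    fix y :: "real \<Rightarrow> complex^'d" assume "y \<in> Cspace T"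
    with S_Cspace Op_Cspace show "R n y \<in> Cspace T"
      unfolding R_def Cspace_def by (auto intro!: continuous_on_diff continuous_on_sum)
  qed
  have "(\<lambda>n. suminf M - (\<Sum>j<n. M j)) \<longlonglongrightarrow> suminf M - suminf M"
    by (intro tendsto_diff tendsto_const summable_LIMSEQ[OF M_summable])
  then have tail: "tail \<longlonglongrightarrow> 0"
    unfolding tail_def using suminf_minus_initial_segment[OF M_summable] by simp
  have "(\<lambda>n. opnorm T (R n)) \<longlonglongrightarrow> 0"
    by (rule tendsto_sandwich[OF always_eventually always_eventually tendsto_const tail])
      (use R_le R_nonneg in auto)
  then have "(\<lambda>n. opnorm T (\<lambda>y t. S y t - (\<Sum>j<n. Op j y t))) \<longlonglongrightarrow> 0"
    by (simp add: R_def)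
  then show ?thesis
    by (intro exI[of _ S] conjI ballI S_Cspace S_bounded)
qed

end

theorem mainTheorem8:
  fixes \<alpha> T :: real and A :: "complex^'d^'d"
  assumes "0 < \<alpha>" and "\<alpha> < 1" and "0 < T"
  shows "(\<forall>j. \<forall>y\<in>Cspace T. series_term A \<alpha> j y \<in> Cspace T)
    \<and> (\<forall>j. bounded_op T (series_term A \<alpha> j))
    \<and> summable (\<lambda>j. opnorm T (series_term A \<alpha> j))
    \<and> (\<exists>S. (\<forall>y\<in>Cspace T. S y \<in> Cspace T) \<and> bounded_op T S
         \<and> (\<lambda>n. opnorm T (\<lambda>y. (\<lambda>t. S y t - (\<Sum>j<n. series_term A \<alpha> j y t))))
              \<longlonglongrightarrow> 0)"
proof -
  note \<alpha> = assms(1,2)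
  have T: "0 \<le> T" using assms(3) by simp
  obtain K where K: "0 < K" and A: "\<And>x. norm (A *v x) \<le> norm x * K"
    using bounded_linear.pos_bounded[OF matrix_vector_mul_bounded_linear[of A]] by blast
  define M where "M j = K ^ j * (\<Prod>k<Suc j. L_factor \<alpha> k) * T ^ Suc j" for j
  have M_nonneg: "0 \<le> M j" for j
    unfolding M_def using K T by (simp add: prod_nonneg L_factor_nonneg[OF \<alpha>])
  have "summable M"
    unfolding M_def using K T by (intro summable_series_term_bound \<alpha>) auto
  have term_le: "norm (series_term A \<alpha> j y t) \<le> supnorm T y * M j"
    if "y \<in> Cspace T" "t \<in> {0..T}" for j y t
    unfolding M_def using K by (intro norm_series_term_le[OF \<alpha> that A]) simp
  note operator_series = series_term_Cspace[OF \<alpha>] term_le M_nonneg \<open>summable M\<close>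
  have terms: "(\<forall>j. bounded_op T (series_term A \<alpha> j)) \<and> summable (\<lambda>j. opnorm T (series_term A \<alpha> j))"
    by (rule operator_terms_summable[OF T]) (assumption | rule operator_series)+
  have sum: "\<exists>S. (\<forall>y\<in>Cspace T. S y \<in> Cspace T) \<and> bounded_op T S
      \<and> (\<lambda>n. opnorm T (\<lambda>y t. S y t - (\<Sum>j<n. series_term A \<alpha> j y t))) \<longlonglongrightarrow> 0"
    by (rule operator_series_converges[OF T]) (assumption | rule operator_series)+
  have Cspace: "\<forall>j. \<forall>y\<in>Cspace T. series_term A \<alpha> j y \<in> Cspace T"
    using series_term_Cspace[OF \<alpha>] by blast
  show ?thesis
    by (intro conjI Cspace conjunct1[OF terms] conjunct2[OF terms] sum)
qed

end
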